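(* Let $k\ge 4$ and let $w$ be a word over $\{a,b\}$. Let $p$ be an occurrence of $u=ba^{k-1}$ and $q$ an occurrence of $v=b^{k-1}a$ in $w$ that are consecutive ($p$ before $q$), with sets of forbidden local positions $F_p$ and $F_q$, and suppose $|F_p|=|F_q|$. Suppose $F_q=\{0,i,i+1,\dots,k-2\}$ for some $2\le i\le k-2$, and suppose $F_p$ is a single cyclic block, i.e. $F_p=\{c,c+1,\dots,c+m-1\}$ with all elements taken modulo $k$, for some $c\in\{0,\dots,k-1\}$ and $m\ge 1$. Then either $F_p=\{0,1\}\cup\{i+2,i+3,\dots,k-1\}$ or $F_p=\{0\}\cup\{i+1,i+2,\dots,k-1\}$.
   Context: $\Sigma=\{a,b\}$. $S_k=\left(\Sigma^k\setminus\{ba^{k-1},b^{k-1}a\}\right)\cup\left(\Sigma^{k-1}\setminus\{a^{k-1},b^{k-1}\}\right)$, $u=ba^{k-1}$, $v=b^{k-1}a$. $\mathit{Pref}(S^* )$ denotes the set of prefixes of words in $S^*$. For $w=w_1\cdots w_n$, $w[i..j]=w_i\cdots w_j$ (empty if $i>j$). A position $j$, $0\le j\le n-1$, is forbidden in $w$ if $w[j+1..n]\notin\mathit{Pref}(S_k^* )$. An occurrence of $p\in\{u,v\}$ in $w$ is an index $s$ with $w[s+1..s+k]=p$; local position $i\in\{0,\dots,k-1\}$ is the position $s+i$ of $w$, and it is forbidden in the occurrence if $s+i$ is forbidden in $w$. Two occurrences of words from $\{u,v\}$ starting at $s<t$ overlap if $t<s+k$; they are consecutive if either they overlap or they are the only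 occurrences of $u$ or $v$ lying inside the factor $w[s+1..t+k]$. *)

theory Defs
  imports Main
begin

datatype letter = a | b

definition u_word :: "nat \<Rightarrow> letter list" where
  "u_word k = b # replicate (k - 1) a"

definition v_word :: "nat \<Rightarrow> letter list" where
  "v_word k = replicate (k - 1) b @ [a]"

definition S_set :: "nat \<Rightarrow> letter list set" where
  "S_set k = {x. length x = k \<and> x \<noteq> u_word k \<and> x \<noteq> v_word k}
           \<union> {x. length x = k - 1 \<and> x \<noteq> replicate (k - 1) a \<and> x \<noteq> replicate (k - 1) b}"

definition star :: "'x list set \<Rightarrow> 'x list set" where
  "star L = {concat xs | xs. set xs \<subseteq> L}"

definition Pref :: "'x list set \<Rightarrow> 'x list set" where
  "Pref L = {x. \<exists>y. x @ y \<in> L}"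

text \<open>Position j (0 <= j <= n-1) is forbidden in w iff w[j+1..n] = drop j w is not in Pref(S_k^*).\<close>
definition forbidden :: "nat \<Rightarrow> letter list \<Rightarrow> nat \<Rightarrow> bool" where
  "forbidden k w j \<longleftrightarrow> j < length w \<and> drop j w \<notin> Pref (star (S_set k))"

text \<open>Occurrence of p starting at index s: w[s+1..s+|p|] = p.\<close>
definition occ :: "letter list \<Rightarrow> letter list \<Rightarrow> nat \<Rightarrow> bool" where
  "occ w p s \<longleftrightarrow> s + length p \<le> length w \<and> take (length p) (drop s w) = p"

definition forb_local :: "nat \<Rightarrow> letter list \<Rightarrow> nat \<Rightarrow> nat set" where
  "forb_local k w s = {i. i < k \<and> forbidden k w (s + i)}"

definition consecutive :: "nat \<Rightarrow> letter list \<Rightarrow> nat \<Rightarrow> nat \<Rightarrow> bool" where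
  "consecutive k w s t \<longleftrightarrow> s < t \<and>
     (t < s + k \<or>
      (\<forall>r. s \<le> r \<and> r + k \<le> t + k \<and> (occ w (u_word k) r \<or> occ w (v_word k) r)
            \<longrightarrow> r = s \<or> r = t))"

end

theory Submission
  imports Defs
begin

(* Write P for "forbidden" and let s < t be the consecutive occurrences of
   u and v.  Three local rules for forbidden positions are derived from the shape of
   S_k: between s and t every length-k factor lies in S_k, so forbiddenness propagates
   from q to q + k, and q is forbidden once q + (k - 1) and q + k are; at u, a forbidden
   start forces a forbidden last position.  Record, for a window of k consecutive
   positions, the residues modulo k (normalised to 0 at t) of its forbidden positions.
   At t this is F_q = {0} \<union> {i..k-2}; sliding the window back towards s keeps it
   inside F_q and closed under successors on {i..k-2}.  At s the window is F_p rotated,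
   a cyclic block of the same size as F_q, differing from the window at s + 1 in at most
   one residue.  As F_q is not a cyclic block, a short case analysis leaves three shapes,
   and undoing the rotation yields the two sets of the statement. *)

lemma prefix_star_append:
  assumes "z \<in> S" and "r \<in> Pref (star S)"
  shows "z @ r \<in> Pref (star S)"
proof -
  obtain y xs where "r @ y = concat xs" "set xs \<subseteq> S"
    using assms(2) unfolding Pref_def star_def by blast
  then have "(z @ r) @ y = concat (z # xs)" "set (z # xs) \<subseteq> S"
    using assms(1) by auto
  then show ?thesis unfolding Pref_def star_def by blast
qed

lemma prefix_star_first_factor:
  assumes "x \<in> Pref (star S)" "x \<noteq> []" "[] \<notin> S" "\<forall>z\<in>S. length z \<le> length x"
  shows "\<exists>z\<in>S. take (length z) x = z \<and> drop (length z) x \<in> Pref (star S)"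
proof -
  obtain y xs where xy: "x @ y = concat xs" "set xs \<subseteq> S"
    using assms(1) unfolding Pref_def star_def by blast
  then obtain z zs where xs: "xs = z # zs" using assms(2) by (cases xs) auto
  have zS: "z \<in> S" and zsS: "set zs \<subseteq> S" using xy xs by auto
  have factored: "x @ y = z @ concat zs" using xy xs by simp
  have short: "length z \<le> length x" using assms(4) zS by blast
  have "take (length z) x = z" using factored short
    by (metis append_eq_append_conv_if take_all_iff)
  moreover have "drop (length z) x @ y = concat zs" using factored short
    by (auto simp: append_eq_append_conv_if split: if_splits)
  ultimately show ?thesis using zS zsS unfolding Pref_def star_def by blast
qed

(* Positions beyond the end of w are never forbidden, since the empty word lies in
   every Pref (star S); so the range condition in the definition can be dropped. *)
lemma forbidden_iff:
  "forbidden k w p \<longleftrightarrow> drop p w \<notin> Pref (star (S_set k))"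
proof -
  have "[] \<in> Pref (star L)" for L :: "letter list set"
    unfolding Pref_def star_def by (intro CollectI exI[of _ "[]"]) auto
  then show ?thesis unfolding forbidden_def by (cases "p < length w") auto
qed

lemma S_set_length: "x \<in> S_set k \<Longrightarrow> length x = k \<or> length x = k - 1"
  unfolding S_set_def by auto

lemma not_forbidden_through_factor:
  assumes "take n (drop q w) \<in> S_set k" and "\<not> forbidden k w (q + n)"
  shows "\<not> forbidden k w q"
proof -
  have "drop q w = take n (drop q w) @ drop (q + n) w"
    by (metis append_take_drop_id drop_drop add.commute)
  then show ?thesis using assms prefix_star_append by (metis forbidden_iff)
qed

(* Local rule 2: when at least k letters remain after q, every admissible
   factorisation starting at q begins with a factor of length k - 1 or k; hence q is
   forbidden as soon as both q + (k - 1) and q + k are. *)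
lemma forbidden_from_next_two:
  assumes k2: "k \<ge> 2" and len: "q + k \<le> length w"
    and "forbidden k w (q + (k - 1))" and "forbidden k w (q + k)"
  shows "forbidden k w q"
proof (rule ccontr)
  let ?x = "drop q w"
  assume "\<not> forbidden k w q"
  then have x: "?x \<in> Pref (star (S_set k))" by (simp add: forbidden_iff)
  have "?x \<noteq> []" "[] \<notin> S_set k" "\<forall>z\<in>S_set k. length z \<le> length ?x"
    using len k2 S_set_length by fastforce+
  then obtain z where "z \<in> S_set k" "take (length z) ?x = z"
      "drop (length z) ?x \<in> Pref (star (S_set k))"
    using prefix_star_first_factor[OF x] by blast
  then show False using assms S_set_length[of z k] by (auto simp: forbidden_iff add.commute)
qed

(* Local rule 3: at an occurrence of u = b a^(k-1) the prefix b a^(k-2) lies in S_k,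
   so if the start of the occurrence is forbidden, so is its last position. *)
lemma forbidden_at_u_occurrence:
  assumes k3: "k \<ge> 3" and u: "occ w (u_word k) s" and "forbidden k w s"
  shows "forbidden k w (s + (k - 1))"
proof -
  have "take k (drop s w) = b # replicate (k - 1) a"
    using u k3 by (simp add: occ_def u_word_def)
  then have "take (k - 1) (drop s w) = take (k - 1) (b # replicate (k - 1) a)"
    by (metis take_take diff_le_self min_def)
  also have "\<dots> = b # replicate (k - 2) a"
    using k3 by (simp add: take_Cons' take_replicate min_def numeral_2_eq_2)
  finally have prefix: "take (k - 1) (drop s w) = b # replicate (k - 2) a" .
  have km: "k - 1 = Suc (k - 2)" using k3 by simp
  have "b # replicate (k - 2) a \<noteq> replicate (k - 1) a"
    and "b # replicate (k - 2) a \<noteq> replicate (k - 1) b"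
    unfolding km using k3 by simp_all
  then have "b # replicate (k - 2) a \<in> S_set k"
    unfolding S_set_def km by simp
  then show ?thesis using assms prefix not_forbidden_through_factor by metis
qed

lemma length_u_word [simp]: "0 < k \<Longrightarrow> length (u_word k) = k"
  and length_v_word [simp]: "0 < k \<Longrightarrow> length (v_word k) = k"
  by (simp_all add: u_word_def v_word_def)

lemma occ_nth: "occ w p s \<Longrightarrow> j < length p \<Longrightarrow> w ! (s + j) = p ! j"
  unfolding occ_def by (metis nth_take nth_drop add_leD1 le_add_diff_inverse le_diff_conv2 add.commute)

(* An occurrence of u cannot overlap a later occurrence of v: inside u every
   letter after the first is a, while v starts with b. *)
lemma occurrences_u_v_apart:
  assumes k2: "k \<ge> 2" and u: "occ w (u_word k) s" and v: "occ w (v_word k) t"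
    and "s < t"
  shows "s + k \<le> t"
proof (rule ccontr)
  assume "\<not> s + k \<le> t"
  then have d: "0 < t - s" "t - s < k" using \<open>s < t\<close> by auto
  have "w ! t = u_word k ! (t - s)" using occ_nth[OF u, of "t - s"] d k2 by simp
  also have "\<dots> = a" using d by (simp add: u_word_def)
  finally have "w ! t = a" .
  moreover have "w ! t = v_word k ! 0" using occ_nth[OF v, of 0] k2 by simp
  moreover have "v_word k ! 0 = b" using k2 by (simp add: v_word_def nth_append)
  ultimately show False by simp
qed

(* Between consecutive occurrences of u and v, every length-k factor is neither u
   nor v, hence belongs to S_k. *)
lemma factor_between_consecutive:
  assumes k2: "k \<ge> 2" and cons: "consecutive k w s t" and apart: "s + k \<le> t"
    and v: "occ w (v_word k) t" and q: "s < q" "q < t"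
  shows "take k (drop q w) \<in> S_set k"
proof -
  have len: "q + k \<le> length w" using v q k2 by (simp add: occ_def)
  have only_ends: "\<forall>r. s \<le> r \<and> r + k \<le> t + k \<and> (occ w (u_word k) r \<or> occ w (v_word k) r)
      \<longrightarrow> r = s \<or> r = t"
    using cons apart unfolding consecutive_def by auto
  have no_occ: "\<not> occ w (u_word k) q \<and> \<not> occ w (v_word k) q"
    using only_ends[rule_format, of q] q by auto
  then have "take k (drop q w) \<noteq> u_word k" "take k (drop q w) \<noteq> v_word k"
    using len k2 by (auto simp: occ_def)
  moreover have "length (take k (drop q w)) = k" using len by simp
  ultimately show ?thesis unfolding S_set_def by blast
qed

lemma forbidden_propagation_between:
  assumes k2: "k \<ge> 2" and u: "occ w (u_word k) s" and v: "occ w (v_word k) t"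
    and cons: "consecutive k w s t" and q: "s < q" "q < t"
  shows "(forbidden k w q \<longrightarrow> forbidden k w (q + k))
    \<and> (forbidden k w (q + (k - 1)) \<and> forbidden k w (q + k) \<longrightarrow> forbidden k w q)"
proof -
  have "s + k \<le> t"
    using occurrences_u_v_apart[OF k2 u v] cons by (simp add: consecutive_def)
  then have "take k (drop q w) \<in> S_set k"
    using factor_between_consecutive[OF k2 cons _ v q] by blast
  moreover have "q + k \<le> length w" using v q k2 by (simp add: occ_def)
  ultimately show ?thesis
    using not_forbidden_through_factor forbidden_from_next_two[OF k2] by blast
qed

(* The phase of position p is its residue modulo k, normalised so that the position t
   of the occurrence of v has phase 0.  Writing (k - 1) * t instead of - t keeps the
   arithmetic in nat. *)
definition phase :: "nat \<Rightarrow> nat \<Rightarrow> nat \<Rightarrow> nat" where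
  "phase k t p = (p + (k - 1) * t) mod k"

lemma phase_add: "phase k t (p + j) = (phase k t p + j) mod k"
  unfolding phase_def mod_add_left_eq by (simp add: ac_simps)

lemma phase_period: "phase k t (p + k) = phase k t p"
  unfolding phase_add by (simp add: phase_def)

lemma phase_origin:
  assumes "j < k" shows "phase k t (t + j) = j"
proof -
  have shift: "t + j + (k - 1) * t = j + k * t" using assms by (cases k) auto
  show ?thesis using assms unfolding phase_def shift by simp
qed

lemma phase_inj_window:
  assumes "x \<le> p1" "p1 < x + k" "x \<le> p2" "p2 < x + k"
    and "phase k t p1 = phase k t p2"
  shows "p1 = p2"
proof (rule ccontr)
  have no_collision: False
    if "q1 < q2" "q2 < q1 + k" "phase k t q1 = phase k t q2" for q1 q2
  proof -
    have "k dvd (q2 + (k - 1) * t) - (q1 + (k - 1) * t)"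
      using that mod_eq_dvd_iff_nat[of "q1 + (k - 1) * t" "q2 + (k - 1) * t" k]
      unfolding phase_def by simp
    then have "k dvd q2 - q1" by simp
    then show False using that nat_dvd_not_less[of "q2 - q1" k] by simp
  qed
  assume "p1 \<noteq> p2"
  then consider "p1 < p2" | "p2 < p1" by linarith
  then show False
  proof cases
    case 1 then show False using assms no_collision[of p1 p2] by linarith
  next
    case 2 then show False using assms no_collision[of p2 p1] by linarith
  qed
qed

(* The window at q records the phases of the P-positions among q, ..., q + k - 1.
   For the window at an occurrence this is the set of forbidden local positions,
   rotated by the phase of its start. *)
definition window :: "nat \<Rightarrow> nat \<Rightarrow> (nat \<Rightarrow> bool) \<Rightarrow> nat \<Rightarrow> nat set" where
  "window k t P q = {phase k t p | p. q \<le> p \<and> p < q + k \<and> P p}"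

lemma window_eq_image:
  "window k t P q = (\<lambda>j. (phase k t q + j) mod k) ` {j. j < k \<and> P (q + j)}"
proof (intro set_eqI iffI)
  fix r assume "r \<in> window k t P q"
  then obtain p where "r = phase k t p" "q \<le> p" "p < q + k" "P p"
    unfolding window_def by blast
  then have "r = (phase k t q + (p - q)) mod k \<and> p - q < k \<and> P (q + (p - q))"
    using phase_add[of k t q "p - q"] by simp
  then show "r \<in> (\<lambda>j. (phase k t q + j) mod k) ` {j. j < k \<and> P (q + j)}" by blast
next
  fix r assume "r \<in> (\<lambda>j. (phase k t q + j) mod k) ` {j. j < k \<and> P (q + j)}"
  then obtain j where "r = phase k t (q + j)" "j < k" "P (q + j)"
    by (auto simp: phase_add)
  then show "r \<in> window k t P q" unfolding window_def by force
qed

lemma window_inj: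
  "inj_on (\<lambda>j. (phase k t q + j) mod k) {j. j < k \<and> P (q + j)}"
proof (rule inj_onI)
  fix j1 j2 assume "j1 \<in> {j. j < k \<and> P (q + j)}" "j2 \<in> {j. j < k \<and> P (q + j)}"
    and "(phase k t q + j1) mod k = (phase k t q + j2) mod k"
  then have "q + j1 = q + j2"
    using phase_inj_window[of q "q + j1" k "q + j2" t] by (simp add: phase_add)
  then show "j1 = j2" by simp
qed

lemma card_window: "card (window k t P q) = card {j. j < k \<and> P (q + j)}"
  unfolding window_eq_image using window_inj by (rule card_image)

lemma in_window_iff:
  assumes "j < k"
  shows "(phase k t q + j) mod k \<in> window k t P q \<longleftrightarrow> P (q + j)"
proof
  assume "(phase k t q + j) mod k \<in> window k t P q"
  then obtain p where "phase k t (q + j) = phase k t p" "q \<le> p" "p < q + k" "P p"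
    unfolding window_def phase_add by auto
  moreover from this have "q + j = p" using assms phase_inj_window[of q "q + j" k p t] by simp
  ultimately show "P (q + j)" by simp
next
  assume "P (q + j)"
  then show "(phase k t q + j) mod k \<in> window k t P q"
    unfolding window_eq_image using assms by blast
qed

lemma window_origin:
  assumes "0 < k" shows "window k t P t = {j. j < k \<and> P (t + j)}"
proof -
  have "phase k t t = 0" using phase_origin[of 0 k t] assms by simp
  then show ?thesis unfolding window_eq_image by (auto simp: image_iff)
qed

lemma phase_in_window:
  "q \<le> p \<Longrightarrow> p < q + k \<Longrightarrow> P p \<Longrightarrow> phase k t p \<in> window k t P q"
  unfolding window_def by blast

(* Sliding the window one step only exchanges position q for q + k, which has the
   same phase. *)
lemma window_shift_sub:
  "window k t P q \<subseteq> insert (phase k t q) (window k t P (q + 1))"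
proof
  fix r assume "r \<in> window k t P q"
  then obtain p where p: "r = phase k t p" "q \<le> p" "p < q + k" "P p"
    unfolding window_def by blast
  show "r \<in> insert (phase k t q) (window k t P (q + 1))"
  proof (cases "p = q")
    case False
    then have "q + 1 \<le> p \<and> p < q + 1 + k" using p by simp
    then show ?thesis using p unfolding window_def by blast
  qed (use p in simp)
qed

lemma window_shift_sup:
  "window k t P (q + 1) - {phase k t q} \<subseteq> window k t P q"
proof
  fix r assume r: "r \<in> window k t P (q + 1) - {phase k t q}"
  then obtain p where p: "r = phase k t p" "q + 1 \<le> p" "p < q + 1 + k" "P p"
    unfolding window_def by blast
  have "p \<noteq> q + k" using r p phase_period[of k t q] by auto
  then have "q \<le> p \<and> p < q + k" using p by simp
  then show "r \<in> window k t P q" using p unfolding window_def by blast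
qed

lemma window_mono_step:
  assumes "P q \<longrightarrow> P (q + k)"
  shows "window k t P q \<subseteq> window k t P (q + 1)"
proof
  fix r assume "r \<in> window k t P q"
  then obtain p where p: "r = phase k t p" "q \<le> p" "p < q + k" "P p"
    unfolding window_def by blast
  show "r \<in> window k t P (q + 1)"
  proof (cases "p = q")
    case True
    then have "r = phase k t (q + k) \<and> q + 1 \<le> q + k \<and> q + k < q + 1 + k \<and> P (q + k)"
      using p assms phase_period[of k t q] by auto
    then show ?thesis unfolding window_def by blast
  next
    case False
    then show ?thesis using p unfolding window_def by force
  qed
qed

(* If moreover P at q follows from P at q + (k - 1) and q + k, then any successor
   phase (r + 1) mod k that the window at q + 1 gains over r is kept at q: the only
   way to lose it would be through position q + k, whose predecessor q + (k - 1)
   carries phase r. *)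
lemma window_closure_step:
  assumes k2: "k \<ge> 2" and fwd: "P q \<longrightarrow> P (q + k)"
    and bwd: "P (q + (k - 1)) \<and> P (q + k) \<longrightarrow> P q"
    and r: "r \<in> window k t P q" and r1: "(r + 1) mod k \<in> window k t P (q + 1)"
  shows "(r + 1) mod k \<in> window k t P q"
proof -
  obtain p1 where p1: "r = phase k t p1" "q + 1 \<le> p1" "p1 < q + 1 + k" "P p1"
    using r window_mono_step[OF fwd] unfolding window_def by blast
  obtain p2 where p2: "(r + 1) mod k = phase k t p2" "q + 1 \<le> p2" "p2 < q + 1 + k" "P p2"
    using r1 unfolding window_def by blast
  show ?thesis
  proof (cases "p2 = q + k")
    case True
    have "phase k t (p1 + 1) = phase k t p2" using p1(1) p2(1) phase_add[of k t p1 1] by simp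
    then have "p1 + 1 = p2" using p1 p2 phase_inj_window[of "q + 2" "p1 + 1" k p2 t] True k2
      by simp
    then have "p1 = q + (k - 1)" using k2 True by simp
    then have "P q" using bwd p1(4) p2(4) True by simp
    then have "phase k t q \<in> window k t P q" unfolding window_def using k2 by force
    then show ?thesis using p2 True phase_period[of k t q] by simp
  next
    case False
    then show ?thesis using p2 unfolding window_def by force
  qed
qed

lemma window_backward_invariant:
  assumes k2: "k \<ge> 2"
    and fwd: "\<And>q. s < q \<Longrightarrow> q < t \<Longrightarrow> P q \<longrightarrow> P (q + k)"
    and bwd: "\<And>q. s < q \<Longrightarrow> q < t \<Longrightarrow> P (q + (k - 1)) \<and> P (q + k) \<longrightarrow> P q"
    and closed: "\<forall>r \<in> window k t P t. r \<in> C \<longrightarrow> (r + 1) mod k \<in> window k t P t"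
    and "s < q" "q \<le> t"
  shows "window k t P q \<subseteq> window k t P t
    \<and> (\<forall>r \<in> window k t P q. r \<in> C \<longrightarrow> (r + 1) mod k \<in> window k t P q)"
  using \<open>q \<le> t\<close>
proof (induction rule: inc_induct)
  case base
  show ?case using closed by blast
next
  case (step n)
  have n: "s < n" "n < t" using step.hyps \<open>s < q\<close> by auto
  have sub: "window k t P n \<subseteq> window k t P (n + 1)"
    using window_mono_step fwd[OF n] by blast
  have "(r + 1) mod k \<in> window k t P n" if "r \<in> window k t P n" "r \<in> C" for r
  proof (rule window_closure_step[OF k2 fwd[OF n] bwd[OF n] that(1)])
    show "(r + 1) mod k \<in> window k t P (n + 1)" using step.IH sub that by auto
  qed
  then show ?case using step.IH sub by auto
qed

lemma window_wrap_at_u: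
  assumes k3: "k \<ge> 3" and u: "occ w (u_word k) s"
    and "phase k t s \<in> window k t (forbidden k w) s"
  shows "(phase k t s + (k - 1)) mod k \<in> window k t (forbidden k w) (s + 1)"
proof -
  have "phase k t s = (phase k t s + 0) mod k" using k3 by (simp add: phase_def)
  then have "forbidden k w s" using assms(3) in_window_iff[of 0 k t s] k3 by simp
  then have "forbidden k w (s + (k - 1))" using forbidden_at_u_occurrence[OF k3 u] by blast
  then have "phase k t (s + (k - 1)) \<in> window k t (forbidden k w) (s + 1)"
    by (rule phase_in_window[rotated 2]) (use k3 in auto)
  then show ?thesis by (simp only: phase_add)
qed

lemma cyclic_block_unique_end:
  fixes c k m :: nat
  assumes B: "B = {(c + j) mod k | j. j < m}"
    and "x \<in> B" "(x + 1) mod k \<notin> B" "y \<in> B" "(y + 1) mod k \<notin> B"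
  shows "x = y"
proof -
  have last: "j + 1 = m" if "j < m" "z = (c + j) mod k" "(z + 1) mod k \<notin> B" for j z
  proof (rule ccontr)
    assume "j + 1 \<noteq> m"
    then have "j + 1 < m" using that(1) by simp
    then have "(c + (j + 1)) mod k \<in> B" using B by blast
    moreover have "(z + 1) mod k = (c + (j + 1)) mod k"
      using that(2) by (simp add: mod_Suc_eq)
    ultimately show False using that(3) by simp
  qed
  obtain jx jy where jx: "jx < m" "x = (c + jx) mod k" and jy: "jy < m" "y = (c + jy) mod k"
    using assms(2,4) B by blast
  have "jx = jy" using last[OF jx assms(3)] last[OF jy assms(5)] by simp
  then show ?thesis using jx jy by simp
qed

lemma rotate_cyclic_block:
  fixes e c k m :: nat
  shows "(\<lambda>x. (e + x) mod k) ` {(c + j) mod k | j. j < m} = {(e + c + j) mod k | j. j < m}"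
proof (intro set_eqI iffI)
  fix x assume "x \<in> {(e + c + j) mod k | j. j < m}"
  then obtain j where "j < m" "x = (e + ((c + j) mod k)) mod k"
    by (auto simp: mod_add_right_eq add.assoc)
  then show "x \<in> (\<lambda>x. (e + x) mod k) ` {(c + j) mod k | j. j < m}" by blast
qed (auto simp: mod_add_right_eq add.assoc)

lemma upclosed_subset_missing_one:
  fixes Y :: "nat set"
  assumes sub: "Y \<subseteq> insert 0 {i..n}" and i: "0 < i"
    and hole: "card (insert 0 {i..n} - Y) = 1"
    and upclosed: "\<forall>r \<in> Y. i \<le> r \<longrightarrow> r + 1 \<le> n \<longrightarrow> r + 1 \<in> Y"
  shows "Y = {i..n} \<or> Y = insert 0 {i + 1..n}"
proof -
  obtain y where y: "insert 0 {i..n} - Y = {y}" using hole card_1_singletonE by blast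
  then have Y: "Y = insert 0 {i..n} - {y}" using sub by blast
  have "y = 0 \<or> y = i"
  proof (rule ccontr)
    assume "\<not> (y = 0 \<or> y = i)"
    moreover have "y \<in> insert 0 {i..n}" using y by blast
    ultimately have "i + 1 \<le> y" "y \<le> n" by auto
    then have "y - 1 \<in> Y" using Y by auto
    then have "y \<in> Y" using upclosed \<open>i + 1 \<le> y\<close> \<open>y \<le> n\<close> by fastforce
    then show False using y by blast
  qed
  then show ?thesis using Y i by auto
qed

(* Z (the rotated forbidden set of u) is a cyclic block of
   the same size as P0 = {0} \<union> {i..k-2}; it differs from Y (the window one step
   later, contained in P0 and upward closed) at most in the phase e of the start of
   u, and contains the cyclic predecessor of e in Y whenever it contains e.  Since P0
   itself is not a cyclic block, e is a new phase and only three shapes remain. *)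
lemma phase_set_cases:
  fixes k i e c m :: nat and Y Z :: "nat set"
  defines "P0 \<equiv> insert 0 {i..k - 2}"
  assumes k4: "k \<ge> 4" and i: "2 \<le> i" "i \<le> k - 2"
    and Y_sub: "Y \<subseteq> P0"
    and upclosed: "\<forall>r \<in> Y. i \<le> r \<longrightarrow> r + 1 \<le> k - 2 \<longrightarrow> r + 1 \<in> Y"
    and e: "e < k" and Z_sub: "Z \<subseteq> insert e Y" and Z_sup: "Y - {e} \<subseteq> Z"
    and wrap: "e \<in> Z \<Longrightarrow> (e + (k - 1)) mod k \<in> Y"
    and card_Z: "card Z = card P0"
    and block: "Z = {(c + j) mod k | j. j < m}"
  shows "(e = k - 1 \<and> (Z = {i..k - 1} \<or> Z = insert 0 {i + 1..k - 1}))
    \<or> (e = 1 \<and> i = k - 2 \<and> Z = {0, 1})"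
proof -
  have "Z \<noteq> P0"
  proof
    assume "Z = P0"
    then have "(0::nat) = k - 2"
      using cyclic_block_unique_end[OF block, of 0 "k - 2"] i k4 by (auto simp: P0_def)
    then show False using k4 by simp
  qed
  then have not_in_P0: "\<not> Z \<subseteq> P0"
    using card_subset_eq[of P0 Z] card_Z by (auto simp: P0_def)
  then have e_new: "e \<in> Z" "e \<notin> P0" using Z_sub Y_sub by auto
  then have Z_eq: "Z = insert e Y" and "e \<notin> Y" using Z_sub Z_sup Y_sub by auto
  then have "card (P0 - Y) = 1"
    using card_Z card_Diff_subset[OF _ Y_sub] finite_subset[OF Y_sub] by (simp add: P0_def)
  then have Y_cases: "Y = {i..k - 2} \<or> Y = insert 0 {i + 1..k - 2}"
    using upclosed_subset_missing_one[OF Y_sub[unfolded P0_def]] upclosed i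
    by (simp add: P0_def)
  consider "e = k - 1" | "1 \<le> e" "e < i" using e e_new(2) by (force simp: P0_def)
  then show ?thesis
  proof cases
    case 1
    then show ?thesis using Z_eq Y_cases i by auto
  next
    case 2
    then have shift: "e + (k - 1) = (e - 1) + k" using k4 by simp
    have "(e + (k - 1)) mod k = e - 1" unfolding shift using e by simp
    then have "e - 1 \<in> Y" using wrap e_new by simp
    moreover have "e - 1 < i" using 2 by simp
    ultimately have "e - 1 = 0" using Y_sub by (auto simp: P0_def)
    then have e1: "e = 1" and "0 \<in> Y" using 2 \<open>e - 1 \<in> Y\<close> by auto
    then have Z_eq': "Z = {0, 1} \<union> {i + 1..k - 2}" using Z_eq Y_cases i by auto
    have "i = k - 2"
    proof (rule ccontr)
      assume "i \<noteq> k - 2"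
      then have "(1::nat) = k - 2"
        using cyclic_block_unique_end[OF block, of 1 "k - 2"] Z_eq' i k4 by auto
      then show False using k4 by simp
    qed
    then show ?thesis using Z_eq' e1 by auto
  qed
qed

lemma unrotate_phase_cases:
  fixes k i e :: nat and Z :: "nat set"
  assumes k4: "k \<ge> 4" and i: "2 \<le> i" "i \<le> k - 2"
    and shape: "(e = k - 1 \<and> (Z = {i..k - 1} \<or> Z = insert 0 {i + 1..k - 1}))
      \<or> (e = 1 \<and> i = k - 2 \<and> Z = {0, 1})"
  shows "{j. j < k \<and> (e + j) mod k \<in> Z} = {0, 1} \<union> {i + 2..k - 1}
    \<or> {j. j < k \<and> (e + j) mod k \<in> Z} = {0} \<union> {i + 1..k - 1}"
proof -
  have pred_mod: "(k - 1 + j) mod k = (if j = 0 then k - 1 else j - 1)" if "j < k" for j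
  proof (cases "j = 0")
    case False
    then have shift: "k - 1 + j = (j - 1) + k" using k4 by simp
    have "(k - 1 + j) mod k = ((j - 1) + k) mod k" by (simp only: shift)
    also have "\<dots> = j - 1" using that by (simp only: mod_add_self2) simp
    finally show ?thesis using False by simp
  qed (use k4 in simp)
  have succ_mod: "(1 + j) mod k = (if j = k - 1 then 0 else j + 1)" if "j < k" for j
    using that k4 by auto
  have unrotate: "{j. j < k \<and> (e + j) mod k \<in> Z} = {j. j < k \<and> g j \<in> Z}"
    if "\<And>j. j < k \<Longrightarrow> (e + j) mod k = g j" for g
    using that by auto
  from shape show ?thesis
  proof (elim disjE conjE)
    assume "e = k - 1" "Z = {i..k - 1}"
    then have "{j. j < k \<and> (e + j) mod k \<in> Z} = {0} \<union> {i + 1..k - 1}"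
      using unrotate[of "\<lambda>j. if j = 0 then k - 1 else j - 1"] pred_mod k4 i by auto
    then show ?thesis ..
  next
    assume "e = k - 1" "Z = insert 0 {i + 1..k - 1}"
    then have "{j. j < k \<and> (e + j) mod k \<in> Z} = {0, 1} \<union> {i + 2..k - 1}"
      using unrotate[of "\<lambda>j. if j = 0 then k - 1 else j - 1"] pred_mod k4 i by auto
    then show ?thesis ..
  next
    assume "e = 1" "i = k - 2" "Z = {0, 1}"
    then have "{j. j < k \<and> (e + j) mod k \<in> Z} = {0} \<union> {i + 1..k - 1}"
      using unrotate[of "\<lambda>j. if j = k - 1 then 0 else j + 1"] succ_mod k4 by auto
    then show ?thesis ..
  qed
qed

theorem lemma8:
  fixes k s t i c m :: nat and w :: "letter list"
  assumes "k \<ge> 4"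
    and "occ w (u_word k) s"
    and "occ w (v_word k) t"
    and "consecutive k w s t"
    and "card (forb_local k w s) = card (forb_local k w t)"
    and "2 \<le> i" and "i \<le> k - 2"
    and "forb_local k w t = {0} \<union> {i..k-2}"
    and "c < k" and "1 \<le> m" and "m \<le> k"
    and "forb_local k w s = {(c + j) mod k | j. j < m}"
  shows "forb_local k w s = {0, 1} \<union> {i+2..k-1} \<or> forb_local k w s = {0} \<union> {i+1..k-1}"
proof -
  note k4 = assms(1) and u = assms(2) and v = assms(3) and i = assms(6,7)
  let ?W = "window k t (forbidden k w)"
  let ?e = "phase k t s"
  have local: "forb_local k w q = {j. j < k \<and> forbidden k w (q + j)}" for q
    unfolding forb_local_def ..
  have W_t: "?W t = insert 0 {i..k - 2}"
    using window_origin[of k t] assms(8) k4 by (simp add: local)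
  have "?W (s + 1) \<subseteq> ?W t \<and> (\<forall>r \<in> ?W (s + 1). r \<in> {i..k - 3} \<longrightarrow> (r + 1) mod k \<in> ?W (s + 1))"
  proof (rule window_backward_invariant)
    show "\<forall>r \<in> ?W t. r \<in> {i..k - 3} \<longrightarrow> (r + 1) mod k \<in> ?W t" using W_t k4 by auto
    show "s + 1 \<le> t" using assms(4) by (simp add: consecutive_def)
  qed (use k4 forbidden_propagation_between[OF _ u v assms(4)] in auto)
  then have Y_sub: "?W (s + 1) \<subseteq> insert 0 {i..k - 2}"
    and upclosed: "\<forall>r \<in> ?W (s + 1). i \<le> r \<longrightarrow> r + 1 \<le> k - 2 \<longrightarrow> r + 1 \<in> ?W (s + 1)"
    using W_t k4 by auto
  have card: "card (?W s) = card (insert 0 {i..k - 2})"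
    using card_window assms(5,8) by (simp add: local)
  have "?W s = (\<lambda>j. (?e + j) mod k) ` forb_local k w s"
    by (simp add: window_eq_image local)
  then have block: "?W s = {(?e + c + j) mod k | j. j < m}"
    using assms(12) rotate_cyclic_block by simp
  have e: "?e < k" and k3: "k \<ge> 3" using k4 by (simp_all add: phase_def)
  have shape: "(?e = k - 1 \<and> (?W s = {i..k - 1} \<or> ?W s = insert 0 {i + 1..k - 1}))
      \<or> (?e = 1 \<and> i = k - 2 \<and> ?W s = {0, 1})"
    by (rule phase_set_cases[OF k4 i Y_sub upclosed e window_shift_sub window_shift_sup
        window_wrap_at_u[OF k3 u] card block])
  have "forb_local k w s = {j. j < k \<and> (?e + j) mod k \<in> ?W s}"
    unfolding local by (auto simp: in_window_iff)
  then show ?thesis using unrotate_phase_cases[OF k4 i shape] by simp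
qed

end
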